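(* The images of the forkless monomials $\mathfrak{m}\in\mathfrak{M}$ under the projection $\mathcal{X}\to\mathcal{X}/\mathcal{J}$ form a basis of the $\mathbf{k}$-module $\mathcal{X}/\mathcal{J}$.
   Context: Let $\mathbf{k}$ be a commutative ring, let $\beta,\alpha\in\mathbf{k}$, and let $n$ be a positive integer. Let $\mathcal{X}=\mathbf{k}[x_{i,j}\mid 1\le i<j\le n]$ be the polynomial ring over $\mathbf{k}$ in the indeterminates $x_{i,j}$, and $\mathfrak{M}$ the set of monomials in them. Let $\mathcal{J}$ be the ideal of $\mathcal{X}$ generated by all elements $x_{i,j}x_{j,k}-x_{i,k}(x_{i,j}+x_{j,k}+\beta)-\alpha$ for $1\le i<j<k\le n$. A monomial $\mathfrak{m}\in\mathfrak{M}$ is forkless if there is no triple $1\le i<j<k\le n$ with $x_{i,j}x_{i,k}\mid\mathfrak{m}$. *)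

theory Defs
  imports Main "HOL-Library.Poly_Mapping"
begin

text \<open>The ring X of the paper is the
  subring of polynomials involving only the variables x_(i,j) with 1 <= i < j <= n.\<close>

type_synonym monom = "(nat \<times> nat) \<Rightarrow>\<^sub>0 nat"
type_synonym 'k mpoly = "monom \<Rightarrow>\<^sub>0 'k"

definition valid_var :: "nat \<Rightarrow> nat \<times> nat \<Rightarrow> bool" where
  "valid_var n v \<longleftrightarrow> 1 \<le> fst v \<and> fst v < snd v \<and> snd v \<le> n"

definition monomials :: "nat \<Rightarrow> monom set" where
  "monomials n = {m. \<forall>v\<in>Poly_Mapping.keys m. valid_var n v}"

definition Xring :: "nat \<Rightarrow> ('k::comm_ring_1) mpoly set" where
  "Xring n = {p. \<forall>m\<in>Poly_Mapping.keys p. m \<in> monomials n}"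

definition var :: "nat \<times> nat \<Rightarrow> ('k::comm_ring_1) mpoly" where
  "var v = Poly_Mapping.single (Poly_Mapping.single v 1) 1"

definition const :: "'k::comm_ring_1 \<Rightarrow> 'k mpoly" where
  "const c = Poly_Mapping.single 0 c"

definition gen_elt :: "'k::comm_ring_1 \<Rightarrow> 'k \<Rightarrow> nat \<Rightarrow> nat \<Rightarrow> nat \<Rightarrow> 'k mpoly" where
  "gen_elt \<beta> \<alpha> i j k =
     var (i,j) * var (j,k) - var (i,k) * (var (i,j) + var (j,k) + const \<beta>) - const \<alpha>"

definition Jgens :: "nat \<Rightarrow> 'k::comm_ring_1 \<Rightarrow> 'k \<Rightarrow> 'k mpoly set" where
  "Jgens n \<beta> \<alpha> = {gen_elt \<beta> \<alpha> i j k | i j k. 1 \<le> i \<and> i < j \<and> j < k \<and> k \<le> n}"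

inductive_set ideal_in :: "('a::comm_ring_1) set \<Rightarrow> 'a set \<Rightarrow> 'a set"
  for X :: "'a set" and G :: "'a set" where
  zero: "0 \<in> ideal_in X G"
| step: "p \<in> ideal_in X G \<Longrightarrow> q \<in> X \<Longrightarrow> g \<in> G \<Longrightarrow> p + q * g \<in> ideal_in X G"

definition Jideal :: "nat \<Rightarrow> 'k::comm_ring_1 \<Rightarrow> 'k \<Rightarrow> 'k mpoly set" where
  "Jideal n \<beta> \<alpha> = ideal_in (Xring n) (Jgens n \<beta> \<alpha>)"

definition forkless :: "nat \<Rightarrow> monom \<Rightarrow> bool" where
  "forkless n m \<longleftrightarrow> m \<in> monomials n \<and>
     \<not> (\<exists>i j k. 1 \<le> i \<and> i < j \<and> j < k \<and> k \<le> n \<and>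
            Poly_Mapping.lookup m (i,j) \<noteq> 0 \<and> Poly_Mapping.lookup m (i,k) \<noteq> 0)"

end

theory Submission
  imports Defs "HOL-Library.Product_Lexorder"
begin

text \<open>Order the monomials lexicographically, the variables being ordered as pairs. Then the
  leading monomial of the generator \<open>g\<^sub>i\<^sub>j\<^sub>k\<close> is the fork \<open>x\<^sub>i\<^sub>j x\<^sub>i\<^sub>k\<close>, so the forkless
  monomials are exactly those divisible by no leading monomial. Replacing forks by the lower
  terms of their generators terminates and shows that the forkless monomials span.

  For independence we run Bergman's diamond lemma: two multiples \<open>u g\<close>, \<open>u' g'\<close> of generators
  with the same leading monomial \<open>M\<close> differ by a combination of generator multiples with leading
  monomials below \<open>M\<close>. If the two forks share no variable this is the usual argument for coprime
  leading terms; otherwise they have a common source \<open>i\<close> and together involve only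
  \<open>x\<^sub>i\<^sub>a, x\<^sub>i\<^sub>b, x\<^sub>i\<^sub>c\<close> with \<open>a < b < c\<close>, and two explicit syzygies among \<open>g\<^sub>i\<^sub>a\<^sub>b, g\<^sub>i\<^sub>a\<^sub>c, g\<^sub>i\<^sub>b\<^sub>c,
  g\<^sub>a\<^sub>b\<^sub>c\<close> resolve the overlap. Hence a representation bounded by a fork multiple
  \<open>M = u\<^sub>0 x\<^sub>i\<^sub>j x\<^sub>i\<^sub>k\<close> can be rewritten as \<open>c u\<^sub>0 g\<^sub>i\<^sub>j\<^sub>k\<close> plus one strictly below \<open>M\<close>, with \<open>-c\<close> the
  coefficient of \<open>M\<close>. For a forkless element this coefficient vanishes, so by well-founded descent
  a forkless element of \<open>J\<close> is zero.\<close>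

abbreviation lookup :: "('a \<Rightarrow>\<^sub>0 'b::zero) \<Rightarrow> 'a \<Rightarrow> 'b" where
  "lookup \<equiv> Poly_Mapping.lookup"

abbreviation keys :: "('a \<Rightarrow>\<^sub>0 'b::zero) \<Rightarrow> 'a set" where
  "keys \<equiv> Poly_Mapping.keys"

abbreviation var_monom :: "nat \<times> nat \<Rightarrow> monom" where
  "var_monom v \<equiv> Poly_Mapping.single v 1"

abbreviation monom_poly :: "monom \<Rightarrow> 'k::comm_ring_1 \<Rightarrow> 'k mpoly" where
  "monom_poly u c \<equiv> Poly_Mapping.single u c"

definition is_triple :: "nat \<Rightarrow> nat \<Rightarrow> nat \<Rightarrow> nat \<Rightarrow> bool" where
  "is_triple n i j k \<longleftrightarrow> 1 \<le> i \<and> i < j \<and> j < k \<and> k \<le> n"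

definition fork :: "nat \<Rightarrow> nat \<Rightarrow> nat \<Rightarrow> monom" where
  "fork i j k = var_monom (i,j) + var_monom (i,k)"

definition fork_reduct :: "'k::comm_ring_1 \<Rightarrow> 'k \<Rightarrow> nat \<Rightarrow> nat \<Rightarrow> nat \<Rightarrow> 'k mpoly" where
  "fork_reduct \<beta> \<alpha> i j k =
     monom_poly (var_monom (i,j) + var_monom (j,k)) 1 - monom_poly (var_monom (i,k) + var_monom (j,k)) 1
     - monom_poly (var_monom (i,k)) \<beta> - monom_poly 0 \<alpha>"

lemma gen_elt_eq_fork_reduct:
  "gen_elt \<beta> \<alpha> i j k = fork_reduct \<beta> \<alpha> i j k - monom_poly (fork i j k) 1"
  by (simp add: gen_elt_def fork_reduct_def fork_def var_def const_def mult_single algebra_simps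
      add.commute)

subsection \<open>The monomial order\<close>

text \<open>The order on monomials is the one of \<open>Poly_Mapping\<close>, with pairs ordered by
  \<open>Product_Lexorder\<close>: the smallest variable at which the exponents differ decides.\<close>

lemma less_monomI:
  fixes m1 m2 :: monom
  assumes "lookup m1 v < lookup m2 v" "\<And>w. w < v \<Longrightarrow> lookup m1 w = lookup m2 w"
  shows "m1 < m2"
  using assms unfolding less_poly_mapping.rep_eq less_fun_def by blast

lemma lookup_single_if: "lookup (Poly_Mapping.single k v) k' = (if k = k' then v else 0)"
  by (simp add: lookup_single when_def)

lemma fork_dominates:
  assumes "i < j" "j < k"
  shows "var_monom (i,j) + var_monom (j,k) < fork i j k"
    and "var_monom (i,k) + var_monom (j,k) < fork i j k"
    and "var_monom (i,k) < fork i j k"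
    and "0 < fork i j k"
  unfolding fork_def
  by (rule less_monomI[where v="(i,k)"] less_monomI[where v="(i,j)"];
      use assms in \<open>force simp: lookup_add lookup_single_if\<close>)+

lemma lex_less_than_map:
  fixes f g :: "'a::linorder \<Rightarrow> nat"
  assumes "sorted_wrt (<) xs" "v \<in> set xs" "f v < g v" "\<And>w. w < v \<Longrightarrow> f w = g w"
  shows "(map f xs, map g xs) \<in> lex less_than"
  using assms(1,2)
proof (induction xs)
  case (Cons x xs)
  show ?case
  proof (cases "x = v")
    case False
    with Cons.prems have "v \<in> set xs" "x < v" by auto
    then show ?thesis using Cons assms(4) by simp
  qed (use assms(3) in simp)
qed simp

lemma wf_less_monomials: "wf {(x, y). x < y \<and> x \<in> monomials n \<and> y \<in> monomials n}"
proof -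
  have "finite {v. valid_var n v}"
    by (rule finite_subset[of _ "{0..n} \<times> {0..n}"]) (auto simp: valid_var_def)
  then obtain vs where vs: "sorted_wrt (<) vs" "set vs = {v. valid_var n v}"
    by (metis sorted_list_of_set.set_sorted_key_list_of_set sorted_list_of_set.strict_sorted_key_list_of_set)
  have "{(x, y). x < y \<and> x \<in> monomials n \<and> y \<in> monomials n}
      \<subseteq> inv_image (lex less_than) (\<lambda>m. map (lookup m) vs)"
  proof clarsimp
    fix x y :: monom
    assume "x < y" "y \<in> monomials n"
    then obtain v where v: "lookup x v < lookup y v" "\<And>w. w < v \<Longrightarrow> lookup x w = lookup y w"
      unfolding less_poly_mapping.rep_eq less_fun_def by blast
    then have "v \<in> keys y" by (simp add: in_keys_iff)
    then have "v \<in> set vs" using \<open>y \<in> monomials n\<close> vs(2) unfolding monomials_def by blast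
    then show "(map (lookup x) vs, map (lookup y) vs) \<in> lex less_than"
      using lex_less_than_map[of vs v "lookup x" "lookup y", OF vs(1) _ v] by blast
  qed
  then show ?thesis
    by (rule wf_subset[rotated]) (intro wf_inv_image wf_lex wf_less_than)
qed

lemma monomials_add: "a \<in> monomials n \<Longrightarrow> b \<in> monomials n \<Longrightarrow> a + b \<in> monomials n"
  unfolding monomials_def using keys_add[of a b] by blast

lemma monomials_diff: "a \<in> monomials n \<Longrightarrow> a - b \<in> monomials n"
  unfolding monomials_def by (auto simp: in_keys_iff lookup_minus)

lemma monomials_var_monom: "valid_var n v \<Longrightarrow> var_monom v \<in> monomials n"
  unfolding monomials_def by simp

lemma monomials_zero: "0 \<in> monomials n"
  unfolding monomials_def by simp

lemma is_triple_valid_vars: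
  assumes "is_triple n i j k"
  shows "valid_var n (i,j)" "valid_var n (i,k)" "valid_var n (j,k)"
  using assms unfolding is_triple_def valid_var_def by auto

lemma fork_in_monomials: "is_triple n i j k \<Longrightarrow> fork i j k \<in> monomials n"
  unfolding fork_def by (intro monomials_add monomials_var_monom is_triple_valid_vars)

lemma monom_diff_add_cancel: "(\<And>v. lookup a v \<le> lookup (m::monom) v) \<Longrightarrow> m - a + a = m"
  by (rule poly_mapping_eqI) (simp add: lookup_add lookup_minus)

lemma Xring_iff_keys: "p \<in> Xring n \<longleftrightarrow> keys p \<subseteq> monomials n"
  unfolding Xring_def by blast

lemma Xring_diff: "p \<in> Xring n \<Longrightarrow> q \<in> Xring n \<Longrightarrow> p - q \<in> Xring n"
  unfolding Xring_iff_keys using keys_diff[of p q] by blast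

lemma Xring_mult: "p \<in> Xring n \<Longrightarrow> q \<in> Xring n \<Longrightarrow> p * q \<in> Xring n"
  unfolding Xring_iff_keys using keys_mult[of p q] by (force intro: monomials_add)

lemma Xring_monom_poly: "u \<in> monomials n \<Longrightarrow> monom_poly u c \<in> Xring n"
  unfolding Xring_iff_keys by simp

lemma fork_reduct_in_Xring: "is_triple n i j k \<Longrightarrow> fork_reduct \<beta> \<alpha> i j k \<in> Xring n"
  unfolding fork_reduct_def
  by (intro Xring_diff Xring_monom_poly monomials_add monomials_var_monom monomials_zero;
      erule is_triple_valid_vars)

lemma keys_subset_induct [consumes 1, case_names zero add]:
  fixes p :: "'a \<Rightarrow>\<^sub>0 'b::comm_monoid_add"
  assumes "keys p \<subseteq> S" "P 0"
    and "\<And>m c q. m \<in> S \<Longrightarrow> keys q \<subseteq> S \<Longrightarrow> P q \<Longrightarrow> P (Poly_Mapping.single m c + q)"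
  shows "P p"
  using assms(1)
proof (induction p rule: Poly_Mapping.update_induct)
  case const
  show ?case by (fact assms(2))
next
  case (update f a b)
  have "Poly_Mapping.update a b f = Poly_Mapping.single a b + f"
    using \<open>a \<notin> keys f\<close>
    by (intro poly_mapping_eqI) (auto simp: lookup_update lookup_add lookup_single_if in_keys_iff)
  moreover have "a \<in> S" "keys f \<subseteq> S"
    using update.prems \<open>b \<noteq> 0\<close> by (auto simp: keys_update)
  ultimately show ?case using update.IH assms(3) by simp
qed

lemma keys_fork_reduct:
  assumes "i < j" "j < k" "x \<in> keys (fork_reduct \<beta> \<alpha> i j k)"
  shows "x < fork i j k"
proof -
  have "x \<in> {var_monom (i,j) + var_monom (j,k), var_monom (i,k) + var_monom (j,k), var_monom (i,k), 0}"
    using assms(3) unfolding fork_reduct_def by (auto dest!: subsetD[OF keys_diff] split: if_splits)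
  then show ?thesis using fork_dominates[OF assms(1,2)] by auto
qed

lemma keys_monom_mult:
  fixes p :: "'k::comm_ring_1 mpoly"
  shows "x \<in> keys (monom_poly u c * p) \<Longrightarrow> \<exists>y\<in>keys p. x = u + y"
  using keys_mult[of "monom_poly u c" p] by (auto split: if_splits)

lemma keys_monom_mult_fork_reduct:
  assumes "i < j" "j < k" "x \<in> keys (monom_poly u c * fork_reduct \<beta> \<alpha> i j k)"
  shows "x < u + fork i j k"
  using keys_monom_mult[OF assms(3)] keys_fork_reduct[OF assms(1,2)] add_strict_left_mono by blast

lemma monom_mult_gen_elt:
  "monom_poly u c * gen_elt \<beta> \<alpha> i j k
     = monom_poly u c * fork_reduct \<beta> \<alpha> i j k - monom_poly (u + fork i j k) c"
  by (simp add: gen_elt_eq_fork_reduct right_diff_distrib mult_single)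

lemma keys_monom_mult_gen_elt:
  assumes "i < j" "j < k" "x \<in> keys (monom_poly u c * gen_elt \<beta> \<alpha> i j k)"
  shows "x \<le> u + fork i j k"
  using assms(3) keys_monom_mult_fork_reduct[OF assms(1,2), of x u c \<beta> \<alpha>]
  unfolding monom_mult_gen_elt by (auto dest!: subsetD[OF keys_diff] split: if_splits)

lemma lookup_monom_mult_gen_elt:
  assumes "i < j" "j < k"
  shows "lookup (monom_poly u c * gen_elt \<beta> \<alpha> i j k) (u + fork i j k) = - c"
  using keys_monom_mult_fork_reduct[OF assms, where x="u + fork i j k" and u=u and c=c]
  unfolding monom_mult_gen_elt by (auto simp: lookup_minus in_keys_iff)

subsection \<open>Combinations with controlled leading monomials\<close>

text \<open>The diamond-lemma argument manipulates representations \<open>\<Sum> c u g\<^sub>i\<^sub>j\<^sub>k\<close> of ideal elements rather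
  than the elements themselves; \<open>lead_span n \<beta> \<alpha> P\<close> holds the sums in which every leading monomial
  \<open>u x\<^sub>i\<^sub>j x\<^sub>i\<^sub>k\<close> satisfies \<open>P\<close>.\<close>

inductive_set lead_span :: "nat \<Rightarrow> 'k \<Rightarrow> 'k \<Rightarrow> (monom \<Rightarrow> bool) \<Rightarrow> 'k::comm_ring_1 mpoly set"
  for n \<beta> \<alpha> P where
  zero: "0 \<in> lead_span n \<beta> \<alpha> P"
| step: "p \<in> lead_span n \<beta> \<alpha> P \<Longrightarrow> u \<in> monomials n \<Longrightarrow> is_triple n i j k \<Longrightarrow> P (u + fork i j k)
     \<Longrightarrow> p + monom_poly u c * gen_elt \<beta> \<alpha> i j k \<in> lead_span n \<beta> \<alpha> P"

lemma lead_span_term: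
  "u \<in> monomials n \<Longrightarrow> is_triple n i j k \<Longrightarrow> P (u + fork i j k)
     \<Longrightarrow> monom_poly u c * gen_elt \<beta> \<alpha> i j k \<in> lead_span n \<beta> \<alpha> P"
  using lead_span.step[OF lead_span.zero] by fastforce

lemma lead_span_add:
  assumes "p \<in> lead_span n \<beta> \<alpha> P" "q \<in> lead_span n \<beta> \<alpha> P"
  shows "p + q \<in> lead_span n \<beta> \<alpha> P"
  using assms(2)
proof induction
  case zero
  show ?case using assms(1) by simp
next
  case (step q u i j k c)
  then show ?case using lead_span.step[of "p + q"] by (simp add: add.assoc)
qed

lemma lead_span_uminus: "p \<in> lead_span n \<beta> \<alpha> P \<Longrightarrow> - p \<in> lead_span n \<beta> \<alpha> P"
proof (induction rule: lead_span.induct)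
  case (step q u i j k c)
  then show ?case
    using lead_span.step[OF step.IH step.hyps(2-4), of "- c"] by (simp add: single_uminus)
qed (simp add: lead_span.zero)

lemma lead_span_diff:
  "p \<in> lead_span n \<beta> \<alpha> P \<Longrightarrow> q \<in> lead_span n \<beta> \<alpha> P \<Longrightarrow> p - q \<in> lead_span n \<beta> \<alpha> P"
  using lead_span_add[OF _ lead_span_uminus] by (metis diff_conv_add_uminus)

lemma lead_span_mono:
  "p \<in> lead_span n \<beta> \<alpha> P \<Longrightarrow> (\<And>x. P x \<Longrightarrow> Q x) \<Longrightarrow> p \<in> lead_span n \<beta> \<alpha> Q"
  by (induction rule: lead_span.induct) (simp_all add: lead_span.zero lead_span.step)

lemma lead_span_monom_mult:
  assumes "p \<in> lead_span n \<beta> \<alpha> P" "w \<in> monomials n" "\<And>x. P x \<Longrightarrow> Q (w + x)"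
  shows "monom_poly w d * p \<in> lead_span n \<beta> \<alpha> Q"
  using assms(1)
proof induction
  case zero
  show ?case by (simp add: lead_span.zero)
next
  case (step q u i j k c)
  have "monom_poly w d * (q + monom_poly u c * gen_elt \<beta> \<alpha> i j k)
      = monom_poly w d * q + monom_poly (w + u) (d * c) * gen_elt \<beta> \<alpha> i j k"
    by (simp add: distrib_left mult_single mult.assoc[symmetric])
  moreover have "Q (w + u + fork i j k)" using step.hyps(4) assms(3) by (simp add: add.assoc)
  ultimately show ?case
    using lead_span.step[OF step.IH monomials_add[OF assms(2) step.hyps(2)] step.hyps(3)] by metis
qed

lemma lead_span_poly_mult:
  assumes "q \<in> Xring n" "is_triple n i j k" "\<And>m. m \<in> keys q \<Longrightarrow> P (m + fork i j k)"
  shows "q * gen_elt \<beta> \<alpha> i j k \<in> lead_span n \<beta> \<alpha> P"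
proof -
  define S where "S = keys q \<inter> monomials n"
  have "keys q \<subseteq> S" using assms(1) unfolding S_def by (auto simp: Xring_iff_keys)
  then show ?thesis
  proof (induction q rule: keys_subset_induct)
    case (add m c r)
    then have m: "m \<in> monomials n" "P (m + fork i j k)" using assms(3) unfolding S_def by auto
    then show ?case
      using lead_span_add[OF lead_span_term[where P=P, OF m(1) assms(2) m(2)] add(3)]
      by (simp add: distrib_right)
  qed (simp add: lead_span.zero)
qed

lemma lookup_lead_span_below: "p \<in> lead_span n \<beta> \<alpha> (\<lambda>x. x < M) \<Longrightarrow> lookup p M = 0"
proof (induction rule: lead_span.induct)
  case (step q u i j k c)
  then have "M \<notin> keys (monom_poly u c * gen_elt \<beta> \<alpha> i j k)"
    using keys_monom_mult_gen_elt[where x=M and u=u and c=c] unfolding is_triple_def by fastforce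
  then show ?case using step.IH by (simp add: lookup_add in_keys_iff)
qed simp

lemma lead_span_bounded:
  "p \<in> lead_span n \<beta> \<alpha> P \<Longrightarrow> p = 0 \<or> (\<exists>M\<in>monomials n. P M \<and> p \<in> lead_span n \<beta> \<alpha> (\<lambda>x. x \<le> M))"
proof (induction rule: lead_span.induct)
  case (step q u i j k c)
  define N where "N = u + fork i j k"
  have N: "N \<in> monomials n" "P N"
    using step.hyps unfolding N_def by (auto intro: monomials_add fork_in_monomials)
  obtain M where M: "M \<in> monomials n" "P M" "N \<le> M" "q \<in> lead_span n \<beta> \<alpha> (\<lambda>x. x \<le> M)"
  proof (cases "q = 0")
    case True
    then show ?thesis using that[OF N order_refl] by (simp add: lead_span.zero)
  next
    case False
    with step.IH obtain M where M: "M \<in> monomials n" "P M" "q \<in> lead_span n \<beta> \<alpha> (\<lambda>x. x \<le> M)"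
      by blast
    from M(3) have "q \<in> lead_span n \<beta> \<alpha> (\<lambda>x. x \<le> max M N)"
      by (rule lead_span_mono) (simp add: le_max_iff_disj)
    moreover have "max M N \<in> monomials n" "P (max M N)" "N \<le> max M N"
      using M N by (auto simp: max_def)
    ultimately show ?thesis using that by blast
  qed
  then show ?case
    using lead_span.step[OF M(4) step.hyps(2,3), of c] unfolding N_def by auto
qed simp

lemma Jideal_eq_lead_span: "Jideal n \<beta> \<alpha> = lead_span n \<beta> \<alpha> (\<lambda>_. True)"
proof
  show "Jideal n \<beta> \<alpha> \<subseteq> lead_span n \<beta> \<alpha> (\<lambda>_. True)"
  proof
    fix p assume "p \<in> Jideal n \<beta> \<alpha>"
    then show "p \<in> lead_span n \<beta> \<alpha> (\<lambda>_. True)"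
      unfolding Jideal_def
    proof induction
      case (step p q g)
      then obtain i j k where "g = gen_elt \<beta> \<alpha> i j k" "is_triple n i j k"
        unfolding Jgens_def is_triple_def by blast
      then show ?case using step by (auto intro: lead_span_add lead_span_poly_mult)
    qed (rule lead_span.zero)
  qed
  show "lead_span n \<beta> \<alpha> (\<lambda>_. True) \<subseteq> Jideal n \<beta> \<alpha>"
  proof
    fix p assume "p \<in> lead_span n \<beta> \<alpha> (\<lambda>_. True)"
    then show "p \<in> Jideal n \<beta> \<alpha>"
      unfolding Jideal_def
    proof induction
      case (step p u i j k c)
      then have "gen_elt \<beta> \<alpha> i j k \<in> Jgens n \<beta> \<alpha>" unfolding Jgens_def is_triple_def by blast
      then show ?case using step by (intro ideal_in.step Xring_monom_poly)
    qed (rule ideal_in.zero)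
  qed
qed

subsection \<open>Overlapping forks\<close>

text \<open>The two syzygies among forks with common source \<open>i\<close> and targets \<open>a < b < c\<close>, with
  \<open>ia, \<dots>, bc\<close> standing for \<open>x\<^sub>i\<^sub>a, \<dots>, x\<^sub>b\<^sub>c\<close>. Every summand on the right-hand sides has
  leading monomial below \<open>x\<^sub>i\<^sub>a x\<^sub>i\<^sub>b x\<^sub>i\<^sub>c\<close>.\<close>

lemma fork_syzygy_iab_iac:
  fixes ia ib ic ab ac bc \<beta> \<alpha> :: "'a::comm_ring_1"
  shows "ic * (ia * ab - ib * (ia + ab + \<beta>) - \<alpha>) - ib * (ia * ac - ic * (ia + ac + \<beta>) - \<alpha>)
   = ac * (ia * ab - ib * (ia + ab + \<beta>) - \<alpha>) - ab * (ia * ac - ic * (ia + ac + \<beta>) - \<alpha>)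
   + ab * (ib * bc - ic * (ib + bc + \<beta>) - \<alpha>) - ac * (ib * bc - ic * (ib + bc + \<beta>) - \<alpha>)
   - ib * (ab * bc - ac * (ab + bc + \<beta>) - \<alpha>) + ic * (ab * bc - ac * (ab + bc + \<beta>) - \<alpha>)"
  by (simp add: algebra_simps)

lemma fork_syzygy_iab_ibc:
  fixes ia ib ic ab ac bc \<beta> \<alpha> :: "'a::comm_ring_1"
  shows "ic * (ia * ab - ib * (ia + ab + \<beta>) - \<alpha>) - ia * (ib * bc - ic * (ib + bc + \<beta>) - \<alpha>)
   = bc * (ia * ab - ib * (ia + ab + \<beta>) - \<alpha>) - ab * (ia * ac - ic * (ia + ac + \<beta>) - \<alpha>)
   - bc * (ia * ac - ic * (ia + ac + \<beta>) - \<alpha>) - \<beta> * (ia * ac - ic * (ia + ac + \<beta>) - \<alpha>)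
   - ia * (ab * bc - ac * (ab + bc + \<beta>) - \<alpha>) + ab * (ib * bc - ic * (ib + bc + \<beta>) - \<alpha>)
   + \<beta> * (ib * bc - ic * (ib + bc + \<beta>) - \<alpha>) + ic * (ab * bc - ac * (ab + bc + \<beta>) - \<alpha>)"
  by (simp add: algebra_simps)

lemma common_source_forks_resolve:
  fixes \<beta> \<alpha> :: "'k::comm_ring_1"
  assumes "1 \<le> i" "i < a" "a < b" "b < c" "c \<le> n"
  defines "T \<equiv> var_monom (i,a) + var_monom (i,b) + var_monom (i,c)"
  shows "monom_poly (var_monom (i,c)) 1 * gen_elt \<beta> \<alpha> i a b
           - monom_poly (var_monom (i,b)) 1 * gen_elt \<beta> \<alpha> i a c \<in> lead_span n \<beta> \<alpha> (\<lambda>x. x < T)"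
    and "monom_poly (var_monom (i,c)) 1 * gen_elt \<beta> \<alpha> i a b
           - monom_poly (var_monom (i,a)) 1 * gen_elt \<beta> \<alpha> i b c \<in> lead_span n \<beta> \<alpha> (\<lambda>x. x < T)"
proof -
  let ?g = "gen_elt \<beta> \<alpha>" and ?x = "\<lambda>v. monom_poly (var_monom v) (1::'k)"
  have triples: "is_triple n i a b" "is_triple n i a c" "is_triple n i b c" "is_triple n a b c"
    using assms(1-5) unfolding is_triple_def by auto
  have monoms: "var_monom (i,a) \<in> monomials n" "var_monom (i,b) \<in> monomials n"
    "var_monom (i,c) \<in> monomials n" "var_monom (a,b) \<in> monomials n" "var_monom (a,c) \<in> monomials n"
    "var_monom (b,c) \<in> monomials n" "0 \<in> monomials n"
    using assms(1-5) unfolding monomials_def valid_var_def by auto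
  have below: "var_monom (a,c) + fork i a b < T" "var_monom (a,b) + fork i a c < T"
    "var_monom (a,b) + fork i b c < T" "var_monom (a,c) + fork i b c < T"
    "var_monom (i,b) + fork a b c < T" "var_monom (i,c) + fork a b c < T"
    "var_monom (b,c) + fork i a b < T" "var_monom (b,c) + fork i a c < T"
    "0 + fork i a c < T" "var_monom (i,a) + fork a b c < T" "0 + fork i b c < T"
    unfolding T_def fork_def
    by (rule less_monomI[where v="(i,a)"] less_monomI[where v="(i,b)"] less_monomI[where v="(i,c)"];
        use assms(1-5) in \<open>force simp: lookup_add lookup_single_if\<close>)+
  have "?x (i,c) * ?g i a b - ?x (i,b) * ?g i a c
     = ?x (a,c) * ?g i a b - ?x (a,b) * ?g i a c + ?x (a,b) * ?g i b c - ?x (a,c) * ?g i b c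
       - ?x (i,b) * ?g a b c + ?x (i,c) * ?g a b c"
    unfolding gen_elt_def var_def[symmetric] by (rule fork_syzygy_iab_iac)
  then show "?x (i,c) * ?g i a b - ?x (i,b) * ?g i a c \<in> lead_span n \<beta> \<alpha> (\<lambda>x. x < T)"
    by (simp only:) (intro lead_span_add lead_span_diff lead_span_term; rule triples monoms below)
  have "?x (i,c) * ?g i a b - ?x (i,a) * ?g i b c
     = ?x (b,c) * ?g i a b - ?x (a,b) * ?g i a c - ?x (b,c) * ?g i a c - monom_poly 0 \<beta> * ?g i a c
       - ?x (i,a) * ?g a b c + ?x (a,b) * ?g i b c + monom_poly 0 \<beta> * ?g i b c + ?x (i,c) * ?g a b c"
    unfolding gen_elt_def var_def[symmetric] const_def[symmetric] by (rule fork_syzygy_iab_ibc)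
  then show "?x (i,c) * ?g i a b - ?x (i,a) * ?g i b c \<in> lead_span n \<beta> \<alpha> (\<lambda>x. x < T)"
    by (simp only:) (intro lead_span_add lead_span_diff lead_span_term; rule triples monoms below)
qed

lemma lookup_fork_ge:
  "1 \<le> lookup (u + fork i j k) (i,j)" "1 \<le> lookup (u + fork i j k) (i,k)"
  by (auto simp: fork_def lookup_add lookup_single_if)

lemma overlapping_forks_resolve:
  fixes \<beta> \<alpha> :: "'k::comm_ring_1"
  assumes "1 \<le> i" "i < a" "a < b" "b < c" "c \<le> n" "u \<in> monomials n"
    and jk: "(j,k) \<in> {(a,b),(a,c),(b,c)}" "(j',k') \<in> {(a,b),(a,c),(b,c)}" "(j,k) \<noteq> (j',k')"
    and M: "u + fork i j k = M" "u' + fork i j' k' = M"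
  shows "monom_poly u 1 * gen_elt \<beta> \<alpha> i j k - monom_poly u' 1 * gen_elt \<beta> \<alpha> i j' k'
     \<in> lead_span n \<beta> \<alpha> (\<lambda>x. x < M)"
proof -
  let ?pairs = "{(a,b),(a,c),(b,c)}"
  define T where "T = var_monom (i,a) + var_monom (i,b) + var_monom (i,c)"
  define third where "third p q = a + b + c - p - q" for p q :: nat
  define D where "D p q = monom_poly (var_monom (i, third p q)) 1 * gen_elt \<beta> \<alpha> i p q" for p q
  have third: "third a b = c" "third a c = b" "third b c = a"
    unfolding third_def using assms(2-4) by auto
  have D_diff: "D a b - D p q \<in> lead_span n \<beta> \<alpha> (\<lambda>x. x < T)" if "(p,q) \<in> ?pairs" for p q
    using that common_source_forks_resolve[OF assms(1-5), of \<beta> \<alpha>]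
    by (auto simp: D_def third T_def lead_span.zero)
  have T_split: "T = var_monom (i, third p q) + fork i p q" if "(p,q) \<in> ?pairs" for p q
    using that unfolding T_def fork_def by (auto simp: third add_ac)
  have "1 \<le> lookup M (i,x)" if "x \<in> {a,b,c}" for x
    using that jk lookup_fork_ge[of u i j k] lookup_fork_ge[of u' i j' k'] M by auto
  then have "lookup T v \<le> lookup M v" for v
    using assms(2-4) unfolding T_def by (auto simp: lookup_add lookup_single_if)
  then have MT: "M = (M - T) + T" by (simp add: monom_diff_add_cancel)
  define w where "w = M - T"
  have w: "w \<in> monomials n"
    unfolding w_def using assms(1-6) jk(1) M(1)
    by (auto intro!: monomials_diff monomials_add fork_in_monomials simp: is_triple_def)
  have multiple_of_D: "monom_poly v 1 * gen_elt \<beta> \<alpha> i p q = monom_poly w 1 * D p q"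
    if "(p,q) \<in> ?pairs" "v + fork i p q = M" for v p q
  proof -
    have "v + fork i p q = (w + var_monom (i, third p q)) + fork i p q"
      using that MT T_split[OF that(1)] unfolding w_def by (simp add: add.assoc)
    then show ?thesis unfolding D_def by (simp add: mult_single mult.assoc[symmetric])
  qed
  have "D j k - D j' k' \<in> lead_span n \<beta> \<alpha> (\<lambda>x. x < T)"
    using lead_span_diff[OF D_diff[OF jk(2)] D_diff[OF jk(1)]] by simp
  then have "monom_poly w 1 * (D j k - D j' k') \<in> lead_span n \<beta> \<alpha> (\<lambda>x. x < M)"
    using w by (rule lead_span_monom_mult) (metis MT add_strict_left_mono w_def)
  then show ?thesis
    using multiple_of_D[OF jk(1) M(1)] multiple_of_D[OF jk(2) M(2)] by (simp add: right_diff_distrib)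
qed

lemma reduct_mult_gen_elt_in_lead_span:
  assumes "w \<in> monomials n" "is_triple n i j k" "is_triple n i' j' k'"
  shows "monom_poly w 1 * fork_reduct \<beta> \<alpha> i' j' k' * gen_elt \<beta> \<alpha> i j k
     \<in> lead_span n \<beta> \<alpha> (\<lambda>x. x < w + fork i' j' k' + fork i j k)"
proof (rule lead_span_poly_mult[OF _ assms(2)])
  show "monom_poly w 1 * fork_reduct \<beta> \<alpha> i' j' k' \<in> Xring n"
    using assms(1,3) by (intro Xring_mult Xring_monom_poly fork_reduct_in_Xring)
  show "m + fork i j k < w + fork i' j' k' + fork i j k"
    if "m \<in> keys (monom_poly w 1 * fork_reduct \<beta> \<alpha> i' j' k')" for m
    using keys_monom_mult_fork_reduct[OF _ _ that] assms(3) unfolding is_triple_def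
    by (simp add: add_strict_right_mono)
qed

lemma disjoint_forks_resolve:
  fixes \<beta> \<alpha> :: "'k::comm_ring_1"
  assumes "u \<in> monomials n" "is_triple n i j k" "is_triple n i' j' k'"
    and M: "u + fork i j k = M" "u' + fork i' j' k' = M"
    and disjoint: "{(i,j), (i,k)} \<inter> {(i',j'), (i',k')} = {}"
  shows "monom_poly u 1 * gen_elt \<beta> \<alpha> i j k - monom_poly u' 1 * gen_elt \<beta> \<alpha> i' j' k'
     \<in> lead_span n \<beta> \<alpha> (\<lambda>x. x < M)"
proof -
  let ?f = "fork i j k" and ?f' = "fork i' j' k'"
  let ?R = "fork_reduct \<beta> \<alpha> i j k" and ?R' = "fork_reduct \<beta> \<alpha> i' j' k'"
  have "lookup (?f + ?f') v \<le> lookup M v" for v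
  proof -
    have "lookup ?f v = 0 \<or> lookup ?f' v = 0"
      using disjoint unfolding fork_def by (auto simp: lookup_add lookup_single_if)
    moreover have "lookup M v = lookup u v + lookup ?f v"
      by (simp add: M(1)[symmetric] lookup_add)
    moreover have "lookup M v = lookup u' v + lookup ?f' v"
      by (simp add: M(2)[symmetric] lookup_add)
    ultimately show ?thesis by (auto simp: lookup_add)
  qed
  then have MT: "M = (M - (?f + ?f')) + (?f + ?f')" by (simp add: monom_diff_add_cancel)
  define w where "w = M - (?f + ?f')"
  have w: "w \<in> monomials n"
    unfolding w_def using assms(1,2) M(1) by (auto intro!: monomials_diff monomials_add fork_in_monomials)
  have "u + ?f = (w + ?f') + ?f" "u' + ?f' = (w + ?f) + ?f'"
    using M MT unfolding w_def by (simp_all add: add_ac)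
  then have "monom_poly u 1 = monom_poly w 1 * monom_poly ?f' (1::'k)"
    "monom_poly u' 1 = monom_poly w 1 * monom_poly ?f (1::'k)"
    by (simp_all add: mult_single)
  \<comment> \<open>\<open>w f' g - w f g' = w R' g - w R g'\<close>, because \<open>f = R - g\<close> and \<open>f' = R' - g'\<close>\<close>
  then have "monom_poly u 1 * gen_elt \<beta> \<alpha> i j k - monom_poly u' 1 * gen_elt \<beta> \<alpha> i' j' k'
      = monom_poly w 1 * ?R' * gen_elt \<beta> \<alpha> i j k - monom_poly w 1 * ?R * gen_elt \<beta> \<alpha> i' j' k'"
    by (simp add: gen_elt_eq_fork_reduct algebra_simps)
  moreover have "M = w + ?f' + ?f" "M = w + ?f + ?f'"
    using MT unfolding w_def by (simp_all add: add_ac)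
  then have "monom_poly w 1 * ?R' * gen_elt \<beta> \<alpha> i j k \<in> lead_span n \<beta> \<alpha> (\<lambda>x. x < M)"
    "monom_poly w 1 * ?R * gen_elt \<beta> \<alpha> i' j' k' \<in> lead_span n \<beta> \<alpha> (\<lambda>x. x < M)"
    using reduct_mult_gen_elt_in_lead_span[OF w assms(2,3)] reduct_mult_gen_elt_in_lead_span[OF w assms(3,2)]
    by simp_all
  ultimately show ?thesis by (simp add: lead_span_diff)
qed

lemma same_leading_monomial_resolve:
  fixes \<beta> \<alpha> :: "'k::comm_ring_1"
  assumes "u \<in> monomials n" "is_triple n i j k" "is_triple n i' j' k'"
    and M: "u + fork i j k = M" "u' + fork i' j' k' = M"
  shows "monom_poly u 1 * gen_elt \<beta> \<alpha> i j k - monom_poly u' 1 * gen_elt \<beta> \<alpha> i' j' k'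
     \<in> lead_span n \<beta> \<alpha> (\<lambda>x. x < M)"
proof (cases "(i,j,k) = (i',j',k')")
  case True
  then have "u = u'" using M by auto
  with True show ?thesis by (simp add: lead_span.zero)
next
  case different: False
  show ?thesis
  proof (cases "{(i,j), (i,k)} \<inter> {(i',j'), (i',k')} = {}")
    case True
    then show ?thesis by (rule disjoint_forks_resolve[OF assms])
  next
    case False
    then have "i' = i" and shared: "j = j' \<or> j = k' \<or> k = j' \<or> k = k'" by auto
    have bounds: "1 \<le> i" "i < j" "j < k" "k \<le> n" "i < j'" "j' < k'" "k' \<le> n"
      using assms(2,3) \<open>i' = i\<close> unfolding is_triple_def by auto
    note resolve = overlapping_forks_resolve[OF _ _ _ _ _ assms(1) _ _ _ M(1) M(2)[unfolded \<open>i' = i\<close>]]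
    consider "j = j'" "k < k'" | "j = j'" "k' < k" | "k = k'" "j < j'" | "k = k'" "j' < j"
      | "j = k'" | "k = j'"
      using shared different \<open>i' = i\<close> by (metis linorder_neqE_nat)
    then show ?thesis
    proof cases
      case 1 then show ?thesis using resolve[where a=j and b=k and c=k'] bounds \<open>i' = i\<close> by auto
    next
      case 2 then show ?thesis using resolve[where a=j and b=k' and c=k] bounds \<open>i' = i\<close> by auto
    next
      case 3 then show ?thesis using resolve[where a=j and b=j' and c=k] bounds \<open>i' = i\<close> by auto
    next
      case 4 then show ?thesis using resolve[where a=j' and b=j and c=k] bounds \<open>i' = i\<close> by auto
    next
      case 5 then show ?thesis using resolve[where a=j' and b=j and c=k] bounds \<open>i' = i\<close> by auto
    next
      case 6 then show ?thesis using resolve[where a=j and b=k and c=k'] bounds \<open>i' = i\<close> by auto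
    qed
  qed
qed

subsection \<open>Linear independence of the forkless monomials\<close>

definition forkless_poly :: "nat \<Rightarrow> 'k::comm_ring_1 mpoly \<Rightarrow> bool" where
  "forkless_poly n q \<longleftrightarrow> (\<forall>m\<in>keys q. forkless n m)"

definition fork_multiple :: "nat \<Rightarrow> monom \<Rightarrow> bool" where
  "fork_multiple n M \<longleftrightarrow> (\<exists>u i j k. u \<in> monomials n \<and> is_triple n i j k \<and> u + fork i j k = M)"

lemma fork_multiple_not_forkless: "fork_multiple n M \<Longrightarrow> \<not> forkless n M"
  unfolding fork_multiple_def forkless_def is_triple_def
  using lookup_fork_ge by (metis not_one_le_zero)

lemma lead_span_less_if_not_fork_multiple:
  assumes "\<not> fork_multiple n M" "p \<in> lead_span n \<beta> \<alpha> (\<lambda>x. x \<le> M)"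
  shows "p \<in> lead_span n \<beta> \<alpha> (\<lambda>x. x < M)"
  using assms(2)
proof induction
  case (step q u i j k c)
  then have "u + fork i j k < M" using assms(1) unfolding fork_multiple_def by force
  then show ?case using lead_span.step[OF step.IH step.hyps(2,3)] by blast
qed (rule lead_span.zero)

lemma lead_span_split_leading:
  fixes \<beta> \<alpha> :: "'k::comm_ring_1"
  assumes u0: "u0 \<in> monomials n" "is_triple n i0 j0 k0" "u0 + fork i0 j0 k0 = M"
    and "p \<in> lead_span n \<beta> \<alpha> (\<lambda>x. x \<le> M)"
  shows "\<exists>c. p - monom_poly u0 c * gen_elt \<beta> \<alpha> i0 j0 k0 \<in> lead_span n \<beta> \<alpha> (\<lambda>x. x < M)"
  using assms(4)
proof induction
  case zero
  show ?case by (rule exI[of _ 0]) (simp add: lead_span.zero)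
next
  case (step q u i j k d)
  let ?h = "gen_elt \<beta> \<alpha> i0 j0 k0" and ?g = "gen_elt \<beta> \<alpha> i j k"
  obtain c where c: "q - monom_poly u0 c * ?h \<in> lead_span n \<beta> \<alpha> (\<lambda>x. x < M)"
    using step.IH by blast
  show ?case
  proof (cases "u + fork i j k < M")
    case True
    have "q - monom_poly u0 c * ?h + monom_poly u d * ?g \<in> lead_span n \<beta> \<alpha> (\<lambda>x. x < M)"
      using lead_span.step[OF c step.hyps(2,3)] True by simp
    then show ?thesis by (metis add_diff_eq diff_add_eq)
  next
    case False
    then have "u + fork i j k = M" using step.hyps(4) by simp
    from same_leading_monomial_resolve[OF step.hyps(2,3) u0(2) this u0(3)]
    have "monom_poly 0 d * (monom_poly u 1 * ?g - monom_poly u0 1 * ?h) \<in> lead_span n \<beta> \<alpha> (\<lambda>x. x < M)"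
      by (rule lead_span_monom_mult) (simp_all add: monomials_zero)
    then have "monom_poly u d * ?g - monom_poly u0 d * ?h \<in> lead_span n \<beta> \<alpha> (\<lambda>x. x < M)"
      by (simp add: right_diff_distrib mult_single mult.assoc[symmetric])
    from lead_span_add[OF c this]
    have "q + monom_poly u d * ?g - monom_poly u0 (c + d) * ?h \<in> lead_span n \<beta> \<alpha> (\<lambda>x. x < M)"
      by (simp add: single_add algebra_simps)
    then show ?thesis by blast
  qed
qed

lemma forkless_lead_span_eq_0:
  fixes \<beta> \<alpha> :: "'k::comm_ring_1"
  shows "M \<in> monomials n \<Longrightarrow> p \<in> lead_span n \<beta> \<alpha> (\<lambda>x. x \<le> M) \<Longrightarrow> forkless_poly n p \<Longrightarrow> p = 0"
proof (induction M arbitrary: p rule: wf_induct[OF wf_less_monomials[of n]])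
  case (1 M)
  have "p \<in> lead_span n \<beta> \<alpha> (\<lambda>x. x < M)"
  proof (cases "fork_multiple n M")
    case False
    then show ?thesis using 1(3) by (rule lead_span_less_if_not_fork_multiple)
  next
    case True
    then obtain u0 i0 j0 k0 where u0: "u0 \<in> monomials n" "is_triple n i0 j0 k0" "u0 + fork i0 j0 k0 = M"
      unfolding fork_multiple_def by blast
    then obtain c where c: "p - monom_poly u0 c * gen_elt \<beta> \<alpha> i0 j0 k0 \<in> lead_span n \<beta> \<alpha> (\<lambda>x. x < M)"
      using lead_span_split_leading[OF u0 1(3)] by blast
    have "M \<notin> keys p"
      using 1(4) fork_multiple_not_forkless[OF True] unfolding forkless_poly_def by blast
    moreover have "lookup (p - monom_poly u0 c * gen_elt \<beta> \<alpha> i0 j0 k0) M = 0"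
      using c by (rule lookup_lead_span_below)
    ultimately have "c = 0"
      using lookup_monom_mult_gen_elt[of i0 j0 k0 u0 c \<beta> \<alpha>] u0 unfolding is_triple_def
      by (simp add: lookup_minus in_keys_iff)
    then show ?thesis using c by simp
  qed
  from lead_span_bounded[OF this] show "p = 0"
  proof
    assume "\<exists>M'\<in>monomials n. M' < M \<and> p \<in> lead_span n \<beta> \<alpha> (\<lambda>x. x \<le> M')"
    then obtain M' where "M' \<in> monomials n" "M' < M" "p \<in> lead_span n \<beta> \<alpha> (\<lambda>x. x \<le> M')"
      by blast
    then show "p = 0" using 1(1)[rule_format, of M' p] 1(2) 1(4) by blast
  qed
qed

theorem forkless_in_Jideal_eq_0:
  fixes \<beta> \<alpha> :: "'k::comm_ring_1"
  assumes "forkless_poly n q" "q \<in> Jideal n \<beta> \<alpha>"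
  shows "q = 0"
  using lead_span_bounded[OF assms(2)[unfolded Jideal_eq_lead_span]] forkless_lead_span_eq_0 assms(1)
  by blast

subsection \<open>The forkless monomials span\<close>

definition forkless_representable :: "nat \<Rightarrow> 'k \<Rightarrow> 'k \<Rightarrow> 'k::comm_ring_1 mpoly \<Rightarrow> bool" where
  "forkless_representable n \<beta> \<alpha> p \<longleftrightarrow> (\<exists>q. forkless_poly n q \<and> p - q \<in> Jideal n \<beta> \<alpha>)"

lemma forkless_representable_add:
  assumes "forkless_representable n \<beta> \<alpha> p" "forkless_representable n \<beta> \<alpha> p'"
  shows "forkless_representable n \<beta> \<alpha> (p + p')"
proof -
  obtain q q' where "forkless_poly n q" "p - q \<in> Jideal n \<beta> \<alpha>"
    "forkless_poly n q'" "p' - q' \<in> Jideal n \<beta> \<alpha>"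
    using assms unfolding forkless_representable_def by blast
  moreover have "p + p' - (q + q') = (p - q) + (p' - q')" by simp
  moreover have "forkless_poly n (q + q')"
    using \<open>forkless_poly n q\<close> \<open>forkless_poly n q'\<close> keys_add[of q q']
    unfolding forkless_poly_def by blast
  ultimately show ?thesis
    unfolding forkless_representable_def Jideal_eq_lead_span by (metis lead_span_add)
qed

lemma forkless_representable_if_diff_in_Jideal:
  assumes "p - p' \<in> Jideal n \<beta> \<alpha>" "forkless_representable n \<beta> \<alpha> p'"
  shows "forkless_representable n \<beta> \<alpha> p"
proof -
  obtain q where "forkless_poly n q" "p' - q \<in> Jideal n \<beta> \<alpha>"
    using assms(2) unfolding forkless_representable_def by blast
  moreover have "p - q = (p - p') + (p' - q)" by simp
  ultimately show ?thesis
    using assms(1) unfolding forkless_representable_def Jideal_eq_lead_span by (metis lead_span_add)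
qed

lemma forkless_representable_if_terms:
  assumes "\<And>m c. m \<in> keys p \<Longrightarrow> forkless_representable n \<beta> \<alpha> (monom_poly m c)"
  shows "forkless_representable n \<beta> \<alpha> p"
  using subset_refl[of "keys p"]
proof (induction p rule: keys_subset_induct)
  case zero
  show ?case
    unfolding forkless_representable_def forkless_poly_def Jideal_eq_lead_span
    by (auto intro!: exI[of _ 0] lead_span.zero)
next
  case (add m c q)
  then show ?case using assms by (blast intro: forkless_representable_add)
qed

lemma monom_poly_forkless_representable:
  fixes \<beta> \<alpha> :: "'k::comm_ring_1"
  shows "m \<in> monomials n \<Longrightarrow> forkless_representable n \<beta> \<alpha> (monom_poly m c)"
proof (induction m arbitrary: c rule: wf_induct[OF wf_less_monomials[of n]])
  case (1 m)
  show ?case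
  proof (cases "forkless n m")
    case True
    then show ?thesis
      unfolding forkless_representable_def forkless_poly_def Jideal_eq_lead_span
      by (auto intro!: exI[of _ "monom_poly m c"] lead_span.zero split: if_splits)
  next
    case False
    then obtain i j k where ijk: "is_triple n i j k" and "lookup m (i,j) \<noteq> 0" "lookup m (i,k) \<noteq> 0"
      using 1(2) unfolding forkless_def is_triple_def by blast
    then have "lookup (fork i j k) v \<le> lookup m v" for v
      unfolding fork_def is_triple_def by (auto simp: lookup_add lookup_single_if)
    then have m: "m = (m - fork i j k) + fork i j k" by (simp add: monom_diff_add_cancel)
    define u where "u = m - fork i j k"
    have u: "u \<in> monomials n" unfolding u_def using 1(2) by (rule monomials_diff)
    let ?R = "monom_poly u c * fork_reduct \<beta> \<alpha> i j k"
    have "forkless_representable n \<beta> \<alpha> ?R"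
    proof (rule forkless_representable_if_terms)
      fix x d assume x: "x \<in> keys ?R"
      have "x < m"
        using keys_monom_mult_fork_reduct[OF _ _ x] ijk m unfolding u_def is_triple_def by simp
      moreover have "x \<in> monomials n"
        using Xring_mult[OF Xring_monom_poly[OF u] fork_reduct_in_Xring[OF ijk]] x
        unfolding Xring_iff_keys by blast
      ultimately show "forkless_representable n \<beta> \<alpha> (monom_poly x d)"
        using 1 by blast
    qed
    moreover have "monom_poly m c - ?R \<in> Jideal n \<beta> \<alpha>"
    proof -
      have "monom_poly m c - ?R = - (monom_poly u c * gen_elt \<beta> \<alpha> i j k)"
        using m unfolding u_def[symmetric] by (simp add: monom_mult_gen_elt)
      then show ?thesis
        unfolding Jideal_eq_lead_span by (simp add: lead_span_uminus lead_span_term u ijk)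
    qed
    ultimately show ?thesis by (blast intro: forkless_representable_if_diff_in_Jideal)
  qed
qed

theorem Xring_forkless_representable:
  fixes \<beta> \<alpha> :: "'k::comm_ring_1"
  assumes "p \<in> Xring n"
  shows "forkless_representable n \<beta> \<alpha> p"
  using assms unfolding Xring_iff_keys
  by (blast intro: forkless_representable_if_terms monom_poly_forkless_representable)

theorem proposition4p4:
  fixes \<beta> \<alpha> :: "'k::comm_ring_1" and n :: nat
  assumes "n \<ge> 1"
  shows "(\<forall>p \<in> Xring n. \<exists>q :: 'k mpoly. (\<forall>m\<in>Poly_Mapping.keys q. forkless n m) \<and> p - q \<in> Jideal n \<beta> \<alpha>)
       \<and> (\<forall>q :: 'k mpoly. (\<forall>m\<in>Poly_Mapping.keys q. forkless n m) \<and> q \<in> Jideal n \<beta> \<alpha> \<longrightarrow> q = 0)"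
  using Xring_forkless_representable forkless_in_Jideal_eq_0
  unfolding forkless_representable_def forkless_poly_def by blast

end
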